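(* As formal power series in $q$ (with coefficients rational functions in $x$, in fact Laurent polynomials), $$\sum_{\lambda\in \mathcal{SC}} x^{n_1(\lambda)} \, q^{\vert\lambda\vert}= (-q;q^2)_{\infty}\left[\Big(1-\frac1x\Big)\sum_{n\geq0}\frac{(x^2-1)^nq^{2n^2+n}}{(q^2;q^2)_n(-q;q^2)_{n+1}}+\frac1x\sum_{n\geq0}\frac{(x^2-1)^nq^{2n^2-n}}{(q^2;q^2)_n(-q;q^2)_n}\right].$$
   Context: A partition is self-conjugate if its Young diagram is symmetric about the main diagonal; $\mathcal{SC}$ is the set of all self-conjugate partitions (including the empty partition of size $0$), and $|\lambda|$ is the size. The hook length of the cell $(i,j)$ is the number of cells to its right in row $i$ plus the number below it in column $j$ plus $1$; $n_1(\lambda)$ is the number of cells of $\lambda$ with hook length $1$. The $q$-Pochhammer symbol is $(a;q)_0=1$, $(a;q)_n=\prod_{j=0}^{n-1}(1-aq^j)$, $(a;q)_\infty=\prod_{j\ge0}(1-aq^j)$. *)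

theory Defs
  imports "HOL-Computational_Algebra.Formal_Power_Series"
begin

definition partition :: "nat list \<Rightarrow> bool" where
  "partition l \<longleftrightarrow> sorted_wrt (\<ge>) l \<and> (\<forall>p\<in>set l. 0 < p)"

definition psize :: "nat list \<Rightarrow> nat" where
  "psize l = sum_list l"

definition cells :: "nat list \<Rightarrow> (nat \<times> nat) set" where
  "cells l = {(i, j). i < length l \<and> j < l ! i}"

definition self_conjugate :: "nat list \<Rightarrow> bool" where
  "self_conjugate l \<longleftrightarrow> (\<forall>i j. (i, j) \<in> cells l \<longleftrightarrow> (j, i) \<in> cells l)"

definition hook_length :: "nat list \<Rightarrow> nat \<times> nat \<Rightarrow> nat" where
  "hook_length l c = card {j'. (fst c, j') \<in> cells l \<and> j' > snd c}
                   + card {i'. (i', snd c) \<in> cells l \<and> i' > fst c} + 1"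

definition n1 :: "nat list \<Rightarrow> nat" where
  "n1 l = card {c \<in> cells l. hook_length l c = 1}"

definition qpoch :: "'a::comm_ring_1 \<Rightarrow> 'a \<Rightarrow> nat \<Rightarrow> 'a" where
  "qpoch a q n = (\<Prod>j<n. 1 - a * q ^ j)"

text \<open>Infinite q-Pochhammer symbol for formal power series, as the limit of
  the finite products in the (X-adic) metric topology of fps.\<close>
definition qpoch_inf :: "'a::field fps \<Rightarrow> 'a fps \<Rightarrow> 'a fps" where
  "qpoch_inf a q = lim (\<lambda>n. qpoch a q n)"

definition SC_gf :: "'a::comm_ring_1 \<Rightarrow> 'a fps" where
  "SC_gf x = Abs_fps (\<lambda>m. \<Sum>l\<in>{l. partition l \<and> self_conjugate l \<and> psize l = m}. x ^ n1 l)"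

end

theory Submission
  imports Defs
begin

text \<open>A self-conjugate partition is determined by its diagonal hooks, of distinct odd lengths
  \<open>2 a_1 - 1 > ... > 2 a_k - 1\<close>, and its cells of hook length \<open>1\<close> (its corners) number
  \<open>2 r - [a_k = 1]\<close>, where \<open>r\<close> is the number of maximal runs of consecutive integers among the
  arms \<open>a_i\<close>. Hence the generating function equals \<open>G_1 + (G_0 - G_1) / x\<close>, where \<open>G_j\<close> sums
  \<open>x^(2 r(A)) q^(\<Sum>a\<in>A. 2 a - 1)\<close> over all finite sets \<open>A\<close> of integers \<open>> j\<close>.
  Splitting off the smallest possible arm \<open>j + 1\<close> gives
  \<open>G_j = (1 + q^(2j+1)) G_(j+1) + (x^2 - 1) q^(2j+1) G_(j+2)\<close>. The series
  \<open>S_j = \<Sum>n. (x^2 - 1)^n q^(2n^2 + (2j-1)n) / ((q^2;q^2)_n (-q;q^2)_(n+j))\<close> satisfy the same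
  recurrence termwise, hence so do the products \<open>(-q;q^2)_\<infinity> S_j\<close>. Both families are \<open>1\<close> modulo
  \<open>q^(2j+1)\<close>, and such solutions of the recurrence are unique; \<open>j = 1\<close> and \<open>j = 0\<close> give the
  two sums.\<close>

unbundle fps_syntax

section \<open>Formal power series\<close>

lemma nth_recurrence_rhs:
  "((1 + fps_X ^ k) * f + fps_const c * fps_X ^ k * g) $ m =
     f $ m + (if m < k then 0 else f $ (m - k) + c * g $ (m - k))"
  by (simp add: distrib_right mult.assoc fps_X_power_mult_nth add.assoc)

text \<open>Each coefficient of \<open>u j\<close> equals that of \<open>u (j + d)\<close> for all \<open>d\<close>, so it vanishes.\<close>
lemma fps_recurrence_unique:
  fixes u :: "nat \<Rightarrow> 'a::comm_ring_1 fps"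
  assumes rec: "\<And>j. u j = (1 + fps_X ^ (2 * j + 1)) * u (Suc j)
                          + fps_const c * fps_X ^ (2 * j + 1) * u (Suc (Suc j))"
    and low: "\<And>j k. k < 2 * j + 1 \<Longrightarrow> u j $ k = 0"
  shows "u j = 0"
proof -
  have "\<forall>j. u j $ m = 0" for m
  proof (induction m rule: less_induct)
    case (less m)
    have step: "u j $ m = u (Suc j) $ m" for j
      by (subst rec) (simp only: nth_recurrence_rhs, use less.IH in simp)
    have shift: "u j $ m = u (j + d) $ m" for j d
    proof (induction d)
      case (Suc d)
      with step[of "j + d"] show ?case by simp
    qed simp
    show ?case
    proof
      fix j
      have "u j $ m = u (j + m) $ m" by (rule shift)
      also have "\<dots> = 0" by (rule low) simp
      finally show "u j $ m = 0" .
    qed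
  qed
  then show ?thesis by (simp add: fps_eq_iff)
qed

lemma tendsto_add_fps:
  fixes f g :: "'b \<Rightarrow> 'a::comm_ring_1 fps"
  assumes "(f \<longlongrightarrow> a) F" "(g \<longlongrightarrow> b) F"
  shows "((\<lambda>x. f x + g x) \<longlongrightarrow> a + b) F"
proof (rule tendsto_fpsI)
  fix n
  have "eventually (\<lambda>x. f x $ n = a $ n) F" "eventually (\<lambda>x. g x $ n = b $ n) F"
    using assms by (auto simp: tendsto_fps_iff)
  then show "eventually (\<lambda>x. (f x + g x) $ n = (a + b) $ n) F"
    by eventually_elim simp
qed

lemma tendsto_mult_left_fps:
  fixes f :: "'b \<Rightarrow> 'a::comm_ring_1 fps"
  assumes "(f \<longlongrightarrow> a) F"
  shows "((\<lambda>x. c * f x) \<longlongrightarrow> c * a) F"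
proof (rule tendsto_fpsI)
  fix n
  have "\<forall>k\<in>{..n}. eventually (\<lambda>x. f x $ k = a $ k) F"
    using assms by (auto simp: tendsto_fps_iff)
  then have "eventually (\<lambda>x. \<forall>k\<in>{..n}. f x $ k = a $ k) F"
    by (rule eventually_ball_finite[rotated]) simp
  then show "eventually (\<lambda>x. (c * f x) $ n = (c * a) $ n) F"
    by eventually_elim (auto simp: fps_mult_nth intro: sum.cong)
qed

lemma sums_add_fps:
  fixes f g :: "nat \<Rightarrow> 'a::comm_ring_1 fps"
  shows "f sums a \<Longrightarrow> g sums b \<Longrightarrow> (\<lambda>n. f n + g n) sums (a + b)"
  unfolding sums_def by (simp add: sum.distrib tendsto_add_fps)

lemma sums_mult_left_fps:
  fixes f :: "nat \<Rightarrow> 'a::comm_ring_1 fps"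
  shows "f sums a \<Longrightarrow> (\<lambda>n. c * f n) sums (c * a)"
  unfolding sums_def by (simp add: sum_distrib_left[symmetric] tendsto_mult_left_fps)

lemma sums_shift_fps:
  fixes f :: "nat \<Rightarrow> 'a::comm_ring_1 fps"
  assumes "f 0 = 0" "(\<lambda>n. f (Suc n)) sums s"
  shows "f sums s"
proof -
  have "(\<lambda>n. \<Sum>i<Suc n. f i) = (\<lambda>n. \<Sum>i<n. f (Suc i))"
    using assms(1) by (simp add: sum.lessThan_Suc_shift del: sum.lessThan_Suc)
  then have "(\<lambda>n. \<Sum>i<Suc n. f i) \<longlonglongrightarrow> s"
    using assms(2) by (simp add: sums_def)
  then show ?thesis
    unfolding sums_def by (rule filterlim_sequentially_Suc[THEN iffD1])
qed

lemma sums_fps_of_nth_eq_0: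
  fixes f :: "nat \<Rightarrow> 'a::comm_ring_1 fps"
  assumes "\<And>n k. k < n \<Longrightarrow> f n $ k = 0"
  shows "f sums Abs_fps (\<lambda>k. \<Sum>n\<le>k. f n $ k)"
  unfolding sums_def
proof (rule tendsto_fpsI)
  fix k
  show "eventually (\<lambda>N. (\<Sum>i<N. f i) $ k = Abs_fps (\<lambda>k. \<Sum>n\<le>k. f n $ k) $ k) sequentially"
    using eventually_ge_at_top[of "Suc k"]
  proof eventually_elim
    case (elim N)
    have "(\<Sum>i<N. f i $ k) = (\<Sum>i\<le>k. f i $ k)"
      by (rule sum.mono_neutral_right) (use elim assms in auto)
    then show ?case by (simp add: fps_sum_nth)
  qed
qed

lemma fps_inverse_eq_mult_inverse:
  fixes P P' E :: "'a::field fps"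
  assumes "P' = P * E" "E $ 0 \<noteq> 0"
  shows "inverse P = E * inverse P'"
proof -
  have "E * inverse P' = inverse P * (E * inverse E)"
    by (simp add: assms(1) fps_inverse_mult ac_simps)
  also have "E * inverse E = 1"
    using assms(2) by (rule inverse_mult_eq_1')
  finally show ?thesis by simp
qed

section \<open>The q-Pochhammer symbols (-q;q^2) and (q^2;q^2)\<close>

abbreviation poch_odd :: "nat \<Rightarrow> 'a::comm_ring_1 fps" where
  "poch_odd n \<equiv> qpoch (- fps_X) (fps_X ^ 2) n"

abbreviation poch_even :: "nat \<Rightarrow> 'a::comm_ring_1 fps" where
  "poch_even n \<equiv> qpoch (fps_X ^ 2) (fps_X ^ 2) n"

lemma qpoch_Suc: "qpoch a q (Suc n) = qpoch a q n * (1 - a * q ^ n)"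
  by (simp add: qpoch_def)

lemma nth_0_qpoch: "(a :: 'a::comm_ring_1 fps) $ 0 = 0 \<Longrightarrow> qpoch a q n $ 0 = 1"
  by (induction n) (simp_all add: qpoch_Suc, simp add: qpoch_def)

lemma poch_odd_Suc: "poch_odd (Suc n) = poch_odd n * (1 + fps_X ^ (2 * n + 1))"
proof -
  have "1 - (- fps_X) * (fps_X ^ 2) ^ n = (1 + fps_X ^ (2 * n + 1) :: 'a fps)"
    by (simp add: power_mult[symmetric] power_add mult.commute)
  then show ?thesis by (simp only: qpoch_Suc)
qed

lemma poch_even_Suc: "poch_even (Suc n) = poch_even n * (1 - fps_X ^ (2 * n + 2))"
proof -
  have "1 - fps_X ^ 2 * (fps_X ^ 2) ^ n = (1 - fps_X ^ (2 * n + 2) :: 'a fps)"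
    by (metis power_mult power_add add.commute)
  then show ?thesis by (simp only: qpoch_Suc)
qed

lemma inverse_poch_odd:
  "inverse (poch_odd n :: 'a::field fps) = (1 + fps_X ^ (2 * n + 1)) * inverse (poch_odd (Suc n))"
  by (rule fps_inverse_eq_mult_inverse[OF poch_odd_Suc]) simp

lemma inverse_poch_even:
  "inverse (poch_even n :: 'a::field fps) = (1 - fps_X ^ (2 * n + 2)) * inverse (poch_even (Suc n))"
  by (rule fps_inverse_eq_mult_inverse[OF poch_even_Suc]) simp

lemma nth_poch_odd_stable:
  "j \<le> n \<Longrightarrow> k < 2 * j + 1 \<Longrightarrow> (poch_odd n :: 'a::comm_ring_1 fps) $ k = poch_odd j $ k"
proof (induction n rule: dec_induct)
  case (step n)
  then have "(poch_odd n * fps_X ^ (2 * n + 1) :: 'a fps) $ k = 0"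
    by (simp only: fps_X_power_mult_right_nth) simp
  then show ?case
    using step by (simp add: poch_odd_Suc distrib_left)
qed simp

lemma qpoch_inf_poch_odd:
  "qpoch_inf (- fps_X) (fps_X ^ 2) = (Abs_fps (\<lambda>k. poch_odd (Suc k) $ k) :: 'a::field fps)"
  unfolding qpoch_inf_def
proof (rule limI, rule tendsto_fpsI)
  fix k
  show "eventually (\<lambda>n. (poch_odd n :: 'a fps) $ k = Abs_fps (\<lambda>k. poch_odd (Suc k) $ k) $ k) sequentially"
    using eventually_ge_at_top[of "Suc k"]
    by eventually_elim (simp add: nth_poch_odd_stable)
qed

lemma nth_qpoch_inf_poch_odd:
  assumes "k < 2 * j + 1"
  shows "qpoch_inf (- fps_X) (fps_X ^ 2) $ k = (poch_odd j :: 'a::field fps) $ k"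
proof -
  have "(poch_odd (max j (Suc k)) :: 'a fps) $ k = poch_odd (Suc k) $ k"
    by (rule nth_poch_odd_stable) auto
  moreover have "(poch_odd (max j (Suc k)) :: 'a fps) $ k = poch_odd j $ k"
    using assms by (simp add: nth_poch_odd_stable)
  ultimately show ?thesis
    by (simp add: qpoch_inf_poch_odd)
qed

section \<open>Self-conjugate partitions and their diagonal arms\<close>

definition strict_partition :: "nat list \<Rightarrow> bool" where
  "strict_partition xs \<longleftrightarrow> sorted_wrt (>) xs \<and> (\<forall>v\<in>set xs. 0 < v)"

lemma strict_partition_Nil [simp]: "strict_partition []"
  by (simp add: strict_partition_def)

lemma strict_partition_Cons:
  "strict_partition (a # as) \<longleftrightarrow> (\<forall>v\<in>set as. v < a) \<and> 0 < a \<and> strict_partition as"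
  by (auto simp: strict_partition_def)

lemma strict_partition_le_hd: "strict_partition (b # bs) \<Longrightarrow> v \<in> set (b # bs) \<Longrightarrow> v \<le> b"
  by (auto simp: strict_partition_Cons)

text \<open>\<open>sc_partition_of as\<close> is the self-conjugate partition whose \<open>i\<close>-th diagonal hook has arm and
  leg of length \<open>as ! i - 1\<close>, hence hook length \<open>2 * as ! i - 1\<close>; the first hook is the outer one.\<close>
fun sc_partition_of :: "nat list \<Rightarrow> nat list" where
  "sc_partition_of [] = []"
| "sc_partition_of (a # as) =
     a # map Suc (sc_partition_of as) @ replicate (a - Suc (length (sc_partition_of as))) 1"

definition drop_first_column :: "nat list \<Rightarrow> nat list" where
  "drop_first_column l = map (\<lambda>v. v - 1) (filter (\<lambda>v. 2 \<le> v) l)"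

lemma length_drop_first_column_le: "length (drop_first_column l) \<le> length l"
  by (simp add: drop_first_column_def length_filter_le)

function diagonal_arms :: "nat list \<Rightarrow> nat list" where
  "diagonal_arms [] = []"
| "diagonal_arms (a # r) = a # diagonal_arms (drop_first_column r)"
  by pat_completeness auto
termination
  by (relation "measure length") (auto simp: le_imp_less_Suc length_drop_first_column_le)

lemma set_sc_partition_of_bounded:
  "strict_partition as \<Longrightarrow> \<forall>b\<in>set as. b \<le> m \<Longrightarrow> \<forall>v\<in>set (sc_partition_of as). 0 < v \<and> v \<le> m"
proof (induction as arbitrary: m)
  case (Cons a as)
  then have "\<forall>v\<in>set (sc_partition_of as). 0 < v \<and> v \<le> a - 1"
    by (intro Cons.IH) (auto simp: strict_partition_Cons)
  with Cons.prems show ?case by (auto simp: strict_partition_Cons)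
qed simp

lemma length_sc_partition_of:
  "strict_partition as \<Longrightarrow> length (sc_partition_of as) = (case as of [] \<Rightarrow> 0 | a # _ \<Rightarrow> a)"
proof (induction as)
  case (Cons a as)
  then have "length (sc_partition_of as) = (case as of [] \<Rightarrow> 0 | b # _ \<Rightarrow> b)"
    by (simp add: strict_partition_Cons)
  moreover have "(case as of [] \<Rightarrow> 0 | b # _ \<Rightarrow> b) < a"
    using Cons.prems by (cases as) (auto simp: strict_partition_Cons)
  ultimately show ?case by simp
qed simp

lemma length_sc_partition_of_Cons:
  "strict_partition (a # as) \<Longrightarrow> length (sc_partition_of as) < a"
  using length_sc_partition_of[of as]
  by (cases as) (auto simp: strict_partition_Cons simp del: sc_partition_of.simps)

lemma partition_sc_partition_of: "strict_partition as \<Longrightarrow> partition (sc_partition_of as)"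
proof (induction as)
  case (Cons a as)
  then have as: "strict_partition as" "\<forall>b\<in>set as. b \<le> a - 1" and "0 < a"
    by (auto simp: strict_partition_Cons)
  have "sorted_wrt (\<ge>) (map Suc (sc_partition_of as))"
    using Cons.IH[OF as(1)] by (auto simp: partition_def intro: sorted_wrt_map_mono)
  moreover have "sorted_wrt (\<ge>) (replicate k (1::nat))" for k
    by (induction k) auto
  ultimately show ?case
    using set_sc_partition_of_bounded[OF as] \<open>0 < a\<close>
    by (auto simp: partition_def sorted_wrt_append)
qed (simp add: partition_def)

lemma sum_list_sc_partition_of:
  "strict_partition as \<Longrightarrow> sum_list (sc_partition_of as) = (\<Sum>a\<leftarrow>as. 2 * a - 1)"
proof (induction as)
  case (Cons a as)
  then show ?case
    using length_sc_partition_of_Cons[OF Cons.prems] sum_list_Suc[of "\<lambda>x. x"]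
    by (auto simp: strict_partition_Cons sum_list_replicate)
qed simp

lemma mem_cells_Cons:
  "(i, j) \<in> cells (a # l) \<longleftrightarrow> (if i = 0 then j < a else (i - 1, j) \<in> cells l)"
  by (cases i) (auto simp: cells_def)

lemma mem_cells_map_Suc_append_ones:
  "(i, j) \<in> cells (map Suc l @ replicate k 1) \<longleftrightarrow>
     i < length l + k \<and> (j = 0 \<or> (0 < j \<and> (i, j - 1) \<in> cells l))"
  by (cases "i < length l") (auto simp: cells_def nth_append)

lemma mem_cells_sc_partition_of_Cons:
  assumes "strict_partition (a # as)"
  shows "(i, j) \<in> cells (sc_partition_of (a # as)) \<longleftrightarrow>
    (if i = 0 then j < a
     else i < a \<and> (j = 0 \<or> (0 < j \<and> (i - 1, j - 1) \<in> cells (sc_partition_of as))))"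
proof -
  have "length (sc_partition_of as) + (a - Suc (length (sc_partition_of as))) = a - 1"
    using length_sc_partition_of_Cons[OF assms] by simp
  then show ?thesis
    by (simp only: sc_partition_of.simps mem_cells_Cons mem_cells_map_Suc_append_ones length_map)
      auto
qed

lemma self_conjugate_sc_partition_of: "strict_partition as \<Longrightarrow> self_conjugate (sc_partition_of as)"
proof (induction as)
  case (Cons a as)
  have IH: "(i, j) \<in> cells (sc_partition_of as) \<longleftrightarrow> (j, i) \<in> cells (sc_partition_of as)" for i j
    using Cons by (simp add: self_conjugate_def strict_partition_Cons)
  have inner: "i < a - 1" if "(i, j) \<in> cells (sc_partition_of as)" for i j
    using that length_sc_partition_of_Cons[OF Cons.prems] by (auto simp: cells_def)
  have inner': "j < a - 1" if "(i, j) \<in> cells (sc_partition_of as)" for i j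
    using that IH inner by blast
  have "0 < a" using Cons.prems by (simp add: strict_partition_Cons)
  show ?case
    unfolding self_conjugate_def mem_cells_sc_partition_of_Cons[OF Cons.prems]
    using IH \<open>0 < a\<close> by (auto dest: inner inner')
qed (simp add: self_conjugate_def cells_def)

lemma drop_first_column_map_Suc_append_ones:
  "\<forall>v\<in>set l. 0 < v \<Longrightarrow> drop_first_column (map Suc l @ replicate k 1) = l"
proof -
  assume "\<forall>v\<in>set l. 0 < v"
  then have "filter (\<lambda>v. 2 \<le> v) (map Suc l) = map Suc l"
    by (auto simp: filter_id_conv)
  moreover have "filter (\<lambda>v. 2 \<le> v) (replicate k (1::nat)) = []"
    by (induction k) auto
  ultimately show ?thesis
    by (simp add: drop_first_column_def comp_def)
qed

lemma diagonal_arms_sc_partition_of: "strict_partition as \<Longrightarrow> diagonal_arms (sc_partition_of as) = as"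
proof (induction as)
  case (Cons a as)
  then have as: "strict_partition as" "\<forall>b\<in>set as. b \<le> a"
    by (auto simp: strict_partition_Cons)
  then have "drop_first_column (map Suc (sc_partition_of as) @ replicate k 1) = sc_partition_of as"
    for k
    using set_sc_partition_of_bounded[OF as] by (intro drop_first_column_map_Suc_append_ones) auto
  with Cons.IH[OF as(1)] show ?case by simp
qed simp

lemma partition_eq_map_Suc_append_ones:
  "partition r \<Longrightarrow>
     r = map Suc (drop_first_column r) @ replicate (length r - length (drop_first_column r)) 1"
proof (induction r)
  case (Cons v r)
  then have r: "partition r" "0 < v" "\<forall>w\<in>set r. w \<le> v"
    by (auto simp: partition_def)
  show ?case
  proof (cases "2 \<le> v")
    case True
    with Cons.IH[OF r(1)] show ?thesis
      by (simp add: drop_first_column_def Suc_diff_le length_filter_le)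
  next
    case False
    with r have "v = 1" "\<forall>w\<in>set r. w = 1"
      using r(1) by (fastforce simp: partition_def)+
    moreover from this have "drop_first_column r = []"
      by (auto simp: drop_first_column_def filter_empty_conv)
    ultimately show ?thesis
      by (simp add: drop_first_column_def replicate_length_same)
  qed
qed (simp add: drop_first_column_def)

lemma partition_drop_first_column: "partition r \<Longrightarrow> partition (drop_first_column r)"
  by (auto simp: partition_def drop_first_column_def intro!: sorted_wrt_map_mono sorted_wrt_filter)

lemma self_conjugate_first_part:
  assumes "partition (a # r)" "self_conjugate (a # r)"
  shows "a = Suc (length r)"
proof -
  have "(j, 0) \<in> cells (a # r) \<longleftrightarrow> j < Suc (length r)" for j
    using assms(1) by (cases j) (auto simp: cells_def partition_def)
  moreover have "(0, j) \<in> cells (a # r) \<longleftrightarrow> j < a" for j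
    by (simp add: cells_def)
  ultimately have "j < a \<longleftrightarrow> j < Suc (length r)" for j
    using assms(2) unfolding self_conjugate_def by blast
  from this[of a] this[of "Suc (length r)"] show ?thesis by linarith
qed

lemma self_conjugate_drop_first_column:
  assumes "partition (a # r)" "self_conjugate (a # r)"
  shows "self_conjugate (drop_first_column r)"
proof -
  define \<mu> where "\<mu> = drop_first_column r"
  have "partition r" using assms(1) by (simp add: partition_def)
  then have "r = map Suc \<mu> @ replicate (length r - length \<mu>) 1"
    unfolding \<mu>_def by (rule partition_eq_map_Suc_append_ones)
  then obtain k where r: "r = map Suc \<mu> @ replicate k 1" ..
  have "(i, j) \<in> cells \<mu> \<longleftrightarrow> (Suc i, Suc j) \<in> cells (a # r)" for i j
    unfolding r mem_cells_Cons mem_cells_map_Suc_append_ones using cells_def by auto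
  with assms(2) show ?thesis
    by (simp add: self_conjugate_def \<mu>_def)
qed

lemma sc_partition_of_diagonal_arms:
  "partition l \<Longrightarrow> self_conjugate l \<Longrightarrow>
     strict_partition (diagonal_arms l) \<and> sc_partition_of (diagonal_arms l) = l"
proof (induction l rule: diagonal_arms.induct)
  case (2 a r)
  define \<mu> where "\<mu> = drop_first_column r"
  have "partition r" using "2.prems"(1) by (simp add: partition_def)
  have a: "a = Suc (length r)"
    using self_conjugate_first_part[OF "2.prems"] .
  have IH: "strict_partition (diagonal_arms \<mu>)" "sc_partition_of (diagonal_arms \<mu>) = \<mu>"
    using "2.IH" partition_drop_first_column[OF \<open>partition r\<close>]
      self_conjugate_drop_first_column[OF "2.prems"] by (auto simp: \<mu>_def)
  have len_\<mu>: "length \<mu> \<le> length r"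
    by (simp add: \<mu>_def length_drop_first_column_le)
  have r: "r = map Suc \<mu> @ replicate (length r - length \<mu>) 1"
    unfolding \<mu>_def using \<open>partition r\<close> by (rule partition_eq_map_Suc_append_ones)
  have "v < a" if "v \<in> set (diagonal_arms \<mu>)" for v
  proof (cases "diagonal_arms \<mu>")
    case (Cons b bs)
    then have "b = length \<mu>"
      using length_sc_partition_of[OF IH(1)] IH(2) by (simp del: sc_partition_of.simps)
    then show ?thesis
      using strict_partition_le_hd[of b bs v] IH(1) Cons that len_\<mu> a by auto
  qed (use that in simp)
  then have "strict_partition (a # diagonal_arms \<mu>)"
    using IH(1) a by (simp add: strict_partition_Cons)
  moreover have "a - Suc (length \<mu>) = length r - length \<mu>"
    using a len_\<mu> by simp
  then have "sc_partition_of (a # diagonal_arms \<mu>) = a # r"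
    by (subst r) (simp only: sc_partition_of.simps IH(2))
  ultimately show ?case
    by (simp add: \<mu>_def)
qed simp

section \<open>Corners and runs of arms\<close>

lemma partition_nth_antimono:
  "partition l \<Longrightarrow> i \<le> i' \<Longrightarrow> i' < length l \<Longrightarrow> l ! i' \<le> l ! i"
  unfolding partition_def
  using sorted_wrt_nth_less[of "\<lambda>x y. y \<le> x" l i i'] by (cases "i = i'") auto

lemma hook_length_eq_1_iff:
  assumes l: "partition l" and c: "(i, j) \<in> cells l"
  shows "hook_length l (i, j) = 1 \<longleftrightarrow> Suc j = l ! i \<and> (Suc i = length l \<or> l ! Suc i < l ! i)"
proof -
  have i: "i < length l" "j < l ! i" using c by (auto simp: cells_def)
  define B where "B = {i'. (i', j) \<in> cells l \<and> i' > i}"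
  have "finite B" unfolding B_def
    by (rule finite_subset[of _ "{..<length l}"]) (auto simp: cells_def)
  have B_empty_iff: "B = {} \<longleftrightarrow> \<not> (Suc i < length l \<and> j < l ! Suc i)"
  proof
    assume short: "\<not> (Suc i < length l \<and> j < l ! Suc i)"
    show "B = {}"
    proof (rule equals0I)
      fix i' assume "i' \<in> B"
      then have "Suc i \<le> i'" "i' < length l" "j < l ! i'" by (auto simp: B_def cells_def)
      then show False using short partition_nth_antimono[OF l, of "Suc i" i'] by auto
    qed
  qed (auto simp: B_def cells_def)
  have "{j'. (i, j') \<in> cells l \<and> j' > j} = {Suc j..<l ! i}"
    using i by (auto simp: cells_def)
  then have "hook_length l (i, j) = 1 \<longleftrightarrow> l ! i - Suc j = 0 \<and> card B = 0"
    by (simp add: hook_length_def B_def)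
  also have "\<dots> \<longleftrightarrow> Suc j = l ! i \<and> B = {}"
    using i \<open>finite B\<close> by auto
  also have "\<dots> \<longleftrightarrow> Suc j = l ! i \<and> (Suc i = length l \<or> l ! Suc i < l ! i)"
    using B_empty_iff i by auto
  finally show ?thesis .
qed

definition part_ends :: "nat list \<Rightarrow> nat set" where
  "part_ends l = {i. i < length l \<and> (Suc i = length l \<or> l ! Suc i < l ! i)}"

lemma hook_1_cells_eq_image_part_ends:
  assumes l: "partition l"
  shows "{c \<in> cells l. hook_length l c = 1} = (\<lambda>i. (i, l ! i - 1)) ` part_ends l"
proof safe
  fix i j assume c: "(i, j) \<in> cells l" "hook_length l (i, j) = 1"
  then show "(i, j) \<in> (\<lambda>i. (i, l ! i - 1)) ` part_ends l"
    using hook_length_eq_1_iff[OF l c(1)] by (force simp: part_ends_def cells_def)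
next
  fix i assume i: "i \<in> part_ends l"
  then have "0 < l ! i" using l by (auto simp: partition_def part_ends_def)
  then show c: "(i, l ! i - 1) \<in> cells l" using i by (simp add: cells_def part_ends_def)
  show "hook_length l (i, l ! i - 1) = 1"
    using hook_length_eq_1_iff[OF l c] \<open>0 < l ! i\<close> i by (simp add: part_ends_def)
qed

lemma bij_betw_nth_part_ends:
  assumes l: "partition l"
  shows "bij_betw (nth l) (part_ends l) (set l)"
proof (rule bij_betw_imageI)
  have decr: "l ! i' < l ! i" if "i \<in> part_ends l" "i' \<in> part_ends l" "i < i'" for i i'
    using that partition_nth_antimono[OF l, of "Suc i" i'] by (fastforce simp: part_ends_def)
  show "inj_on (nth l) (part_ends l)"
    by (rule inj_onI, rule ccontr) (metis decr less_irrefl nat_neq_iff)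
  show "nth l ` part_ends l = set l"
  proof safe
    fix v assume "v \<in> set l"
    define J where "J = {i. i < length l \<and> l ! i = v}"
    have "finite J" "J \<noteq> {}"
      using \<open>v \<in> set l\<close> by (auto simp: J_def in_set_conv_nth)
    then have "Max J \<in> J" "Suc (Max J) \<notin> J"
      by (auto dest: Max_ge)
    have "Suc (Max J) = length l \<or> l ! Suc (Max J) < l ! Max J"
    proof (cases "Suc (Max J) < length l")
      case True
      then show ?thesis
        using partition_nth_antimono[OF l, of "Max J" "Suc (Max J)"] \<open>Max J \<in> J\<close> \<open>Suc (Max J) \<notin> J\<close>
        by (auto simp: J_def)
    qed (use \<open>Max J \<in> J\<close> in \<open>auto simp: J_def\<close>)
    with \<open>Max J \<in> J\<close> have "Max J \<in> part_ends l"
      by (simp add: part_ends_def J_def)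
    then show "v \<in> nth l ` part_ends l"
      by (rule rev_image_eqI) (use \<open>Max J \<in> J\<close> in \<open>simp add: J_def\<close>)
  qed (simp add: part_ends_def)
qed

text \<open>Cells of hook length \<open>1\<close> are the corners, one for each distinct part size.\<close>
lemma n1_eq_card_set:
  assumes "partition l"
  shows "n1 l = card (set l)"
proof -
  have "n1 l = card ((\<lambda>i. (i, l ! i - 1)) ` part_ends l)"
    unfolding n1_def hook_1_cells_eq_image_part_ends[OF assms] ..
  also have "\<dots> = card (part_ends l)"
    by (rule card_image) (rule inj_onI, simp)
  also have "\<dots> = card (set l)"
    using bij_betw_nth_part_ends[OF assms] by (rule bij_betw_same_card)
  finally show ?thesis .
qed

definition runs :: "nat set \<Rightarrow> nat" where
  "runs A = card {a \<in> A. Suc a \<notin> A}"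

lemma runs_empty [simp]: "runs {} = 0"
  by (simp add: runs_def)

lemma runs_insert_max:
  assumes "finite B" "\<forall>v\<in>B. v < a" "0 < a"
  shows "runs (insert a B) = (if a - 1 \<in> B then runs B else Suc (runs B))"
proof -
  define T where "T = {c \<in> B. Suc c \<notin> B}"
  have "finite T" "a \<notin> T" using assms by (auto simp: T_def)
  moreover have "{c \<in> insert a B. Suc c \<notin> insert a B} = insert a (T - {a - 1})"
    using assms by (auto simp: T_def)
  moreover have "a - 1 \<in> T \<longleftrightarrow> a - 1 \<in> B"
    using assms by (auto simp: T_def)
  moreover have "a - 1 \<in> T \<Longrightarrow> Suc (card T - 1) = card T"
    using \<open>finite T\<close> by (cases "card T") auto
  ultimately show ?thesis
    unfolding runs_def T_def[symmetric] by (simp add: card_Diff_singleton_if)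
qed

lemma runs_insert_min:
  assumes "finite B" "\<forall>v\<in>B. s < v"
  shows "runs (insert s B) = (if Suc s \<in> B then runs B else Suc (runs B))"
proof -
  define T where "T = {c \<in> B. Suc c \<notin> B}"
  have "finite T" "s \<notin> T" using assms by (auto simp: T_def)
  moreover have "{c \<in> insert s B. Suc c \<notin> insert s B} = (if Suc s \<in> B then T else insert s T)"
    using assms by (auto simp: T_def)
  ultimately show ?thesis unfolding runs_def T_def[symmetric] by simp
qed

lemma set_sc_partition_of_Cons:
  "set (sc_partition_of (a # as)) =
     insert a (Suc ` set (sc_partition_of as) \<union> (if a \<le> Suc (length (sc_partition_of as)) then {} else {1}))"
  by auto

text \<open>Off the diagonal, corners come in transposed pairs, one pair for each maximal run of consecutive
  diagonal arms, except that the run containing the arm \<open>1\<close> yields a single corner on the diagonal.\<close>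
lemma card_set_sc_partition_of:
  "strict_partition as \<Longrightarrow>
     card (set (sc_partition_of as)) + (if 1 \<in> set as then 1 else 0) = 2 * runs (set as)"
proof (induction as)
  case (Cons a as)
  have as: "strict_partition as" "\<forall>v\<in>set as. v < a" "0 < a"
    using Cons.prems by (auto simp: strict_partition_Cons)
  show ?case
  proof (cases as)
    case Nil
    then show ?thesis using runs_insert_max[of "{}" a] as(3) by auto
  next
    case (Cons b bs)
    have "b < a" "0 < b" using as Cons by (auto simp: strict_partition_Cons)
    have len: "length (sc_partition_of as) = b"
      using length_sc_partition_of[OF as(1)] Cons by simp
    have parts: "\<forall>v\<in>set (sc_partition_of as). 0 < v \<and> v \<le> b"
      using set_sc_partition_of_bounded[OF as(1)] strict_partition_le_hd as(1) Cons by blast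
    have "b \<in> set (sc_partition_of as)" using Cons by simp
    then have "a \<in> Suc ` set (sc_partition_of as) \<longleftrightarrow> a = Suc b"
      using parts \<open>b < a\<close> by force
    moreover have "1 \<notin> Suc ` set (sc_partition_of as)" using parts by auto
    ultimately have "card (set (sc_partition_of (a # as))) =
        card (set (sc_partition_of as)) + (if a = Suc b then 0 else 2)"
      unfolding set_sc_partition_of_Cons len using \<open>b < a\<close>
      by (auto simp: card_image insert_absorb card_insert_if)
    moreover have "a - 1 \<in> set as \<longleftrightarrow> a = Suc b"
      using strict_partition_le_hd[of b bs] as Cons \<open>b < a\<close> by force
    then have "runs (set (a # as)) = (if a = Suc b then runs (set as) else Suc (runs (set as)))"
      using runs_insert_max[of "set as" a] as by simp
    moreover have "1 \<in> set (a # as) \<longleftrightarrow> 1 \<in> set as"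
      using \<open>b < a\<close> \<open>0 < b\<close> Cons by auto
    ultimately show ?thesis
      using Cons.IH[OF as(1)] by simp
  qed
qed (simp add: runs_def)

section \<open>Sets of diagonal arms\<close>

lemma strict_partition_rev_sorted_list_of_set:
  "finite A \<Longrightarrow> 0 \<notin> A \<Longrightarrow> strict_partition (rev (sorted_list_of_set A))"
  unfolding strict_partition_def using strict_sorted_list_of_set[of A]
  by (auto simp: sorted_wrt_rev) (metis gr0I)

lemma strict_partition_imp_rev_sorted:
  assumes "strict_partition xs"
  shows "sorted (rev xs) \<and> distinct xs"
proof -
  have "sorted_wrt (<) (rev xs)"
    using assms by (simp add: strict_partition_def sorted_wrt_rev)
  then show ?thesis by (simp add: strict_sorted_iff)
qed

lemma rev_sorted_list_of_set_set:
  "strict_partition xs \<Longrightarrow> rev (sorted_list_of_set (set xs)) = xs"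
  using sorted_list_of_set.idem_if_sorted_distinct[of "rev xs"] strict_partition_imp_rev_sorted
  by fastforce

lemma sum_list_strict_partition:
  "strict_partition xs \<Longrightarrow> (\<Sum>a\<leftarrow>xs. f a) = (\<Sum>a\<in>set xs. f a)"
  using strict_partition_imp_rev_sorted sum_list_distinct_conv_sum_set by blast

text \<open>The sets of diagonal arms, all greater than \<open>j\<close>, of the self-conjugate partitions of \<open>m\<close>.\<close>
definition arm_sets :: "nat \<Rightarrow> nat \<Rightarrow> nat set set" where
  "arm_sets j m = {A \<in> Pow {Suc j..m}. (\<Sum>a\<in>A. 2 * a - 1) = m}"

lemma finite_arm_sets [simp]: "finite (arm_sets j m)"
  by (simp add: arm_sets_def)

lemma finite_mem_arm_sets: "A \<in> arm_sets j m \<Longrightarrow> finite A"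
  by (auto simp: arm_sets_def dest: finite_subset)

lemma arm_sets_Suc: "arm_sets (Suc j) m = {A \<in> arm_sets j m. Suc j \<notin> A}"
  by (auto simp: arm_sets_def subset_iff Suc_le_eq order.order_iff_strict)

lemma mem_arm_sets_le:
  assumes "A \<in> arm_sets j m" "a \<in> A"
  shows "2 * a - 1 \<le> m"
proof -
  have "(\<Sum>a\<in>A. 2 * a - 1) = m"
    using assms(1) by (simp add: arm_sets_def)
  then show ?thesis
    using member_le_sum[of a A "\<lambda>a. 2 * a - 1"] finite_mem_arm_sets[OF assms(1)] assms(2) by simp
qed

lemma set_diagonal_arms_mem_arm_sets:
  assumes "partition l" "self_conjugate l"
  shows "set (diagonal_arms l) \<in> arm_sets 0 (psize l)"
proof -
  have arms: "strict_partition (diagonal_arms l)" "sc_partition_of (diagonal_arms l) = l"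
    using sc_partition_of_diagonal_arms[OF assms] by auto
  have "(\<Sum>a\<in>set (diagonal_arms l). 2 * a - 1) = (\<Sum>a\<leftarrow>diagonal_arms l. 2 * a - 1)"
    by (rule sum_list_strict_partition[OF arms(1), symmetric])
  also have "\<dots> = psize l"
    using arms(2) sum_list_sc_partition_of[OF arms(1)] by (simp add: psize_def)
  finally have sum: "(\<Sum>a\<in>set (diagonal_arms l). 2 * a - 1) = psize l" .
  have "a \<le> psize l" if "a \<in> set (diagonal_arms l)" for a
    using member_le_sum[of a "set (diagonal_arms l)" "\<lambda>a. 2 * a - 1"] that sum by simp
  with sum arms(1) show ?thesis
    by (auto simp: arm_sets_def strict_partition_def Suc_le_eq)
qed

lemma sc_partition_of_arm_set:
  assumes "A \<in> arm_sets 0 m"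
  defines "l \<equiv> sc_partition_of (rev (sorted_list_of_set A))"
  shows "partition l \<and> self_conjugate l \<and> psize l = m \<and> set (diagonal_arms l) = A"
proof -
  have "finite A" "0 \<notin> A"
    using finite_mem_arm_sets[OF assms(1)] assms(1) by (auto simp: arm_sets_def)
  then have arms: "strict_partition (rev (sorted_list_of_set A))"
    by (rule strict_partition_rev_sorted_list_of_set)
  have "psize l = m"
    using assms(1) \<open>finite A\<close>
    by (simp add: l_def psize_def sum_list_sc_partition_of[OF arms] sum_list_strict_partition[OF arms]
        arm_sets_def)
  then show ?thesis
    using partition_sc_partition_of[OF arms] self_conjugate_sc_partition_of[OF arms]
      diagonal_arms_sc_partition_of[OF arms] \<open>finite A\<close> by (simp add: l_def)
qed

lemma bij_betw_set_diagonal_arms: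
  "bij_betw (\<lambda>l. set (diagonal_arms l))
     {l. partition l \<and> self_conjugate l \<and> psize l = m} (arm_sets 0 m)"
  by (rule bij_betw_byWitness[where f' = "\<lambda>A. sc_partition_of (rev (sorted_list_of_set A))"])
    (use sc_partition_of_diagonal_arms rev_sorted_list_of_set_set sc_partition_of_arm_set
       set_diagonal_arms_mem_arm_sets in auto)

lemma n1_self_conjugate:
  assumes "partition l" "self_conjugate l"
  shows "n1 l + (if 1 \<in> set (diagonal_arms l) then 1 else 0) = 2 * runs (set (diagonal_arms l))"
  using sc_partition_of_diagonal_arms[OF assms] n1_eq_card_set[OF assms(1)]
    card_set_sc_partition_of by metis

lemma nth_SC_gf:
  fixes x :: "'a::field"
  assumes "x \<noteq> 0"
  shows "SC_gf x $ m = (\<Sum>A\<in>arm_sets 0 m. if 1 \<in> A then x ^ (2 * runs A) / x else x ^ (2 * runs A))"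
proof -
  let ?w = "\<lambda>A. if 1 \<in> A then x ^ (2 * runs A) / x else x ^ (2 * runs A)"
  have "x ^ n1 l = ?w (set (diagonal_arms l))" if "partition l" "self_conjugate l" for l
  proof (cases "1 \<in> set (diagonal_arms l)")
    case True
    then have "x ^ (2 * runs (set (diagonal_arms l))) = x ^ n1 l * x"
      using n1_self_conjugate[OF that] by (simp flip: power_Suc2)
    with True assms show ?thesis by simp
  qed (use n1_self_conjugate[OF that] in simp)
  then have "SC_gf x $ m = (\<Sum>l | partition l \<and> self_conjugate l \<and> psize l = m. ?w (set (diagonal_arms l)))"
    by (simp add: SC_gf_def)
  also have "\<dots> = sum ?w (arm_sets 0 m)"
    using sum.reindex_bij_betw[OF bij_betw_set_diagonal_arms] .
  finally show ?thesis .
qed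

definition runs_gf :: "'a::comm_ring_1 \<Rightarrow> nat \<Rightarrow> 'a fps" where
  "runs_gf x j = Abs_fps (\<lambda>m. \<Sum>A\<in>arm_sets j m. x ^ (2 * runs A))"

lemma SC_gf_eq_runs_gf:
  fixes x :: "'a::field"
  assumes "x \<noteq> 0"
  shows "SC_gf x = runs_gf x 1 + fps_const (1 / x) * (runs_gf x 0 - runs_gf x 1)"
proof (rule fps_ext)
  fix m
  let ?w = "\<lambda>A. x ^ (2 * runs A)"
  have without_1: "arm_sets 0 m \<inter> - {A. 1 \<in> A} = arm_sets 1 m"
    and with_1: "arm_sets 0 m \<inter> {A. 1 \<in> A} = arm_sets 0 m - arm_sets 1 m"
    using arm_sets_Suc[of 0 m] by auto
  have "SC_gf x $ m = (\<Sum>A\<in>arm_sets 0 m \<inter> {A. 1 \<in> A}. ?w A / x) + (\<Sum>A\<in>arm_sets 0 m \<inter> - {A. 1 \<in> A}. ?w A)"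
    unfolding nth_SC_gf[OF assms] by (rule sum.If_cases) simp
  also have "\<dots> = (\<Sum>A\<in>arm_sets 0 m - arm_sets 1 m. ?w A) / x + (\<Sum>A\<in>arm_sets 1 m. ?w A)"
    unfolding with_1 without_1 by (simp add: sum_divide_distrib)
  also have "(\<Sum>A\<in>arm_sets 0 m - arm_sets 1 m. ?w A) = sum ?w (arm_sets 0 m) - sum ?w (arm_sets 1 m)"
    by (rule sum_diff) (use arm_sets_Suc[of 0 m] in auto)
  finally show "SC_gf x $ m = (runs_gf x 1 + fps_const (1 / x) * (runs_gf x 0 - runs_gf x 1)) $ m"
    by (simp add: runs_gf_def add.commute)
qed

lemma arm_sets_with_min:
  assumes "2 * j + 1 \<le> m"
  shows "{A \<in> arm_sets j m. Suc j \<in> A} = insert (Suc j) ` arm_sets (Suc j) (m - (2 * j + 1))"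
proof safe
  fix A assume A: "A \<in> arm_sets j m" "Suc j \<in> A"
  have "(\<Sum>a\<in>A - {Suc j}. 2 * a - 1) = m - (2 * j + 1)"
    using A sum.remove[OF finite_mem_arm_sets[OF A(1)] A(2), of "\<lambda>a. 2 * a - 1"]
    by (simp add: arm_sets_def)
  moreover have "A - {Suc j} \<subseteq> {Suc (Suc j)..}"
    using A by (auto simp: arm_sets_def)
  moreover have "a \<le> m - (2 * j + 1)" if "a \<in> A - {Suc j}" for a
    using member_le_sum[of a "A - {Suc j}" "\<lambda>a. 2 * a - 1"] finite_mem_arm_sets[OF A(1)] that
      calculation(1) by simp
  ultimately have "A - {Suc j} \<in> arm_sets (Suc j) (m - (2 * j + 1))"
    by (auto simp: arm_sets_def)
  then show "A \<in> insert (Suc j) ` arm_sets (Suc j) (m - (2 * j + 1))"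
    using A(2) by (metis image_eqI insert_Diff)
next
  fix B assume B: "B \<in> arm_sets (Suc j) (m - (2 * j + 1))"
  then have "Suc j \<notin> B" "B \<subseteq> {Suc (Suc j)..m - (2 * j + 1)}"
    "(\<Sum>a\<in>B. 2 * a - 1) = m - (2 * j + 1)"
    by (auto simp: arm_sets_def)
  moreover have "Suc j \<le> b \<and> b \<le> m" if "b \<in> B" for b
    using subsetD[OF calculation(2) that] by (simp, linarith)
  moreover have "(\<Sum>a\<in>insert (Suc j) B. 2 * a - 1) = (2 * j + 1) + (\<Sum>a\<in>B. 2 * a - 1)"
    using finite_mem_arm_sets[OF B] \<open>Suc j \<notin> B\<close> by simp
  ultimately show "insert (Suc j) B \<in> arm_sets j m"
    using assms by (auto simp: arm_sets_def)
qed

lemma inj_on_insert_arm_sets: "inj_on (insert (Suc j)) (arm_sets (Suc j) m)"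
proof (rule inj_onI)
  fix A B assume "A \<in> arm_sets (Suc j) m" "B \<in> arm_sets (Suc j) m" "insert (Suc j) A = insert (Suc j) B"
  moreover from calculation have "Suc j \<notin> A" "Suc j \<notin> B"
    by (auto simp: arm_sets_Suc)
  ultimately show "A = B" by (metis Diff_insert_absorb)
qed

lemma runs_insert_arm:
  fixes x :: "'a::comm_ring_1"
  assumes "B \<in> arm_sets (Suc j) m"
  shows "x ^ (2 * runs (insert (Suc j) B)) =
    x ^ (2 * runs B) + (if Suc (Suc j) \<in> B then 0 else (x ^ 2 - 1) * x ^ (2 * runs B))"
proof -
  have "finite B" using finite_mem_arm_sets[OF assms] .
  moreover have "\<forall>v\<in>B. Suc j < v"
    using assms unfolding arm_sets_def by auto
  ultimately show ?thesis
    using runs_insert_min[of B "Suc j"] by (simp add: algebra_simps power2_eq_square)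
qed

lemma sum_arm_sets_with_min:
  fixes x :: "'a::comm_ring_1"
  assumes "2 * j + 1 \<le> m"
  defines "m' \<equiv> m - (2 * j + 1)"
  shows "(\<Sum>A | A \<in> arm_sets j m \<and> Suc j \<in> A. x ^ (2 * runs A)) =
    (\<Sum>B\<in>arm_sets (Suc j) m'. x ^ (2 * runs B))
      + (x ^ 2 - 1) * (\<Sum>B\<in>arm_sets (Suc (Suc j)) m'. x ^ (2 * runs B))"
proof -
  have "(\<Sum>A | A \<in> arm_sets j m \<and> Suc j \<in> A. x ^ (2 * runs A)) =
      (\<Sum>B\<in>arm_sets (Suc j) m'. x ^ (2 * runs (insert (Suc j) B)))"
    unfolding arm_sets_with_min[OF assms(1)] m'_def
    by (rule sum.reindex[OF inj_on_insert_arm_sets, unfolded comp_def])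
  also have "\<dots> = (\<Sum>B\<in>arm_sets (Suc j) m'. x ^ (2 * runs B))
      + (\<Sum>B\<in>arm_sets (Suc j) m'. if Suc (Suc j) \<in> B then 0 else (x ^ 2 - 1) * x ^ (2 * runs B))"
    by (simp add: runs_insert_arm sum.distrib cong: sum.cong)
  also have "(\<Sum>B\<in>arm_sets (Suc j) m'. if Suc (Suc j) \<in> B then 0 else (x ^ 2 - 1) * x ^ (2 * runs B))
      = (\<Sum>B\<in>arm_sets (Suc j) m'. if Suc (Suc j) \<notin> B then (x ^ 2 - 1) * x ^ (2 * runs B) else 0)"
    by (rule sum.cong) auto
  also have "\<dots> = (\<Sum>B\<in>arm_sets (Suc (Suc j)) m'. (x ^ 2 - 1) * x ^ (2 * runs B))"
    unfolding arm_sets_Suc[of "Suc j" m'] by (simp add: sum.inter_filter)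
  finally show ?thesis by (simp add: sum_distrib_left)
qed

text \<open>Split according to whether the smallest admissible arm \<open>j + 1\<close>, a hook of length \<open>2 * j + 1\<close>,
  is present; if it is, it starts a new run unless \<open>j + 2\<close> is present as well.\<close>
lemma runs_gf_rec:
  fixes x :: "'a::comm_ring_1"
  shows "runs_gf x j = (1 + fps_X ^ (2 * j + 1)) * runs_gf x (Suc j)
    + fps_const (x ^ 2 - 1) * fps_X ^ (2 * j + 1) * runs_gf x (Suc (Suc j))"
proof (rule fps_ext)
  fix m
  have "arm_sets j m = arm_sets (Suc j) m \<union> {A \<in> arm_sets j m. Suc j \<in> A}"
    using arm_sets_Suc[of j m] by auto
  then have split: "runs_gf x j $ m = runs_gf x (Suc j) $ m
      + (\<Sum>A | A \<in> arm_sets j m \<and> Suc j \<in> A. x ^ (2 * runs A))"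
    unfolding runs_gf_def fps_nth_Abs_fps
    by (subst sum.union_disjoint[symmetric]) (auto simp: arm_sets_Suc)
  show "runs_gf x j $ m = ((1 + fps_X ^ (2 * j + 1)) * runs_gf x (Suc j)
      + fps_const (x ^ 2 - 1) * fps_X ^ (2 * j + 1) * runs_gf x (Suc (Suc j))) $ m"
  proof (cases "2 * j + 1 \<le> m")
    case True
    then show ?thesis
      unfolding split sum_arm_sets_with_min[OF True] nth_recurrence_rhs
      by (simp add: runs_gf_def)
  next
    case False
    then have "{A \<in> arm_sets j m. Suc j \<in> A} = {}"
      using mem_arm_sets_le[of _ j m "Suc j"] by fastforce
    then have "(\<Sum>A | A \<in> arm_sets j m \<and> Suc j \<in> A. x ^ (2 * runs A)) = 0"
      by (simp only: sum.empty)
    with False show ?thesis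
      unfolding split nth_recurrence_rhs by simp
  qed
qed

lemma nth_runs_gf_low:
  assumes "m < 2 * j + 1"
  shows "runs_gf x j $ m = (1 :: 'a::comm_ring_1 fps) $ m"
proof -
  have "A = {}" if "A \<in> arm_sets j m" for A
  proof (rule equals0I)
    fix a assume "a \<in> A"
    then have "Suc j \<le> a" "2 * a - 1 \<le> m"
      using that mem_arm_sets_le[OF that \<open>a \<in> A\<close>] by (auto simp: arm_sets_def)
    with assms show False by linarith
  qed
  moreover have "{} \<in> arm_sets j m \<longleftrightarrow> m = 0"
    by (auto simp: arm_sets_def)
  ultimately have "arm_sets j m = (if m = 0 then {{}} else {})"
    by auto
  then show ?thesis by (simp add: runs_gf_def)
qed

section \<open>The series side\<close>

definition sc_exponent :: "nat \<Rightarrow> nat \<Rightarrow> nat" where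
  "sc_exponent j n = 2 * n * n + 2 * j * n - n"

lemma sc_exponent_add: "sc_exponent j n + n = 2 * n * n + 2 * j * n"
  unfolding sc_exponent_def by (cases n) auto

lemma sc_exponent_Suc: "sc_exponent j (Suc m) = (2 * j + 1) + sc_exponent (Suc (Suc j)) m"
  using sc_exponent_add[of j "Suc m"] sc_exponent_add[of "Suc (Suc j)" m] by (simp add: algebra_simps)

lemma sc_exponent_Suc_Suc:
  "sc_exponent (Suc j) (Suc m) = (2 * m + 2) + (2 * j + 1) + sc_exponent (Suc (Suc j)) m"
  using sc_exponent_add[of "Suc j" "Suc m"] sc_exponent_add[of "Suc (Suc j)" m]
  by (simp add: algebra_simps)

lemma le_sc_exponent: "n \<le> sc_exponent j n"
  using sc_exponent_add[of j n] by (cases n) (simp_all add: sc_exponent_Suc)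

lemma sc_exponent_ge: "0 < n \<Longrightarrow> 2 * j + 1 \<le> sc_exponent j n"
  by (cases n) (simp_all add: sc_exponent_Suc)

definition sc_term :: "'a::field \<Rightarrow> nat \<Rightarrow> nat \<Rightarrow> 'a fps" where
  "sc_term x j n =
     fps_const ((x ^ 2 - 1) ^ n) * fps_X ^ sc_exponent j n / (poch_even n * poch_odd (n + j))"

definition sc_series :: "'a::field \<Rightarrow> nat \<Rightarrow> 'a fps" where
  "sc_series x j = suminf (sc_term x j)"

lemma sc_term_eq:
  "sc_term x j n = fps_X ^ sc_exponent j n *
     (fps_const ((x ^ 2 - 1) ^ n) * inverse (poch_even n) * inverse (poch_odd (n + j)))"
proof -
  have "(poch_even n * poch_odd (n + j) :: 'a fps) $ 0 \<noteq> 0"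
    by (simp add: nth_0_qpoch)
  then show ?thesis
    unfolding sc_term_def by (simp add: fps_divide_unit fps_inverse_mult ac_simps)
qed

lemma nth_sc_term_low: "k < sc_exponent j n \<Longrightarrow> sc_term x j n $ k = 0"
  unfolding sc_term_eq by (simp add: fps_X_power_mult_nth)

lemma sums_sc_series: "sc_term x j sums sc_series x j"
  and sc_series_eq: "sc_series x j = Abs_fps (\<lambda>k. \<Sum>n\<le>k. sc_term x j n $ k)"
proof -
  have "sc_term x j sums Abs_fps (\<lambda>k. \<Sum>n\<le>k. sc_term x j n $ k)"
    by (rule sums_fps_of_nth_eq_0, rule nth_sc_term_low, erule less_le_trans, rule le_sc_exponent)
  then show "sc_term x j sums sc_series x j" "sc_series x j = Abs_fps (\<lambda>k. \<Sum>n\<le>k. sc_term x j n $ k)"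
    by (simp_all add: sc_series_def sums_iff)
qed

text \<open>The recurrence of \<open>runs_gf\<close> holds termwise, with the index shifted in the last summand.\<close>
lemma sc_term_rec:
  "sc_term x j n = (1 + fps_X ^ (2 * j + 1)) * sc_term x (Suc j) n +
     (case n of 0 \<Rightarrow> 0 | Suc m \<Rightarrow> fps_const (x ^ 2 - 1) * fps_X ^ (2 * j + 1) * sc_term x (Suc (Suc j)) m)"
proof (cases n)
  case 0
  then show ?thesis
    unfolding sc_term_eq using inverse_poch_odd[of j] by (simp add: sc_exponent_def qpoch_def)
next
  case (Suc m)
  define A where "A = (fps_X :: 'a fps) ^ (2 * m + 2)"
  define B where "B = (fps_X :: 'a fps) ^ (2 * j + 1)"
  define E where "E = (fps_X :: 'a fps) ^ sc_exponent (Suc (Suc j)) m"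
  define Q where "Q = inverse (poch_even (Suc m) :: 'a fps)"
  define K where "K = inverse (poch_odd (m + Suc (Suc j)) :: 'a fps)"
  define c where "c = fps_const (x ^ 2 - 1)"
  define C where "C = fps_const ((x ^ 2 - 1) ^ m)"
  have "2 * (Suc m + j) + 1 = (2 * m + 2) + (2 * j + 1)" "Suc (Suc m + j) = m + Suc (Suc j)"
    by simp_all
  then have inv_odd: "inverse (poch_odd (Suc m + j) :: 'a fps) = (1 + A * B) * K"
    unfolding A_def B_def K_def using inverse_poch_odd[of "Suc m + j"] by (simp only: power_add)
  have const: "fps_const ((x ^ 2 - 1) ^ Suc m) = c * C"
    by (simp add: c_def C_def)
  have idx: "Suc m + Suc j = m + Suc (Suc j)" by simp
  have XABE: "(fps_X :: 'a fps) ^ ((2 * m + 2) + (2 * j + 1) + sc_exponent (Suc (Suc j)) m) = A * B * E"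
    and XBE: "(fps_X :: 'a fps) ^ ((2 * j + 1) + sc_exponent (Suc (Suc j)) m) = B * E"
    unfolding A_def B_def E_def by (simp_all only: power_add)
  have "sc_term x (Suc j) (Suc m) = A * B * E * (c * C * Q * K)"
    unfolding sc_term_eq sc_exponent_Suc_Suc XABE const idx Q_def[symmetric] K_def[symmetric] ..
  moreover have "sc_term x j (Suc m) = B * E * (c * C * Q * ((1 + A * B) * K))"
    unfolding sc_term_eq sc_exponent_Suc XBE const inv_odd Q_def[symmetric] ..
  moreover have "sc_term x (Suc (Suc j)) m = E * (C * ((1 - A) * Q) * K)"
    unfolding sc_term_eq inverse_poch_even[of m] A_def[symmetric] E_def[symmetric] C_def[symmetric]
      Q_def[symmetric] K_def[symmetric] ..
  ultimately have "sc_term x j (Suc m) =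
      (1 + B) * sc_term x (Suc j) (Suc m) + c * B * sc_term x (Suc (Suc j)) m"
    by algebra
  then show ?thesis
    using Suc by (simp add: c_def B_def)
qed

lemma sc_series_rec:
  "sc_series x j = (1 + fps_X ^ (2 * j + 1)) * sc_series x (Suc j)
     + fps_const (x ^ 2 - 1) * fps_X ^ (2 * j + 1) * sc_series x (Suc (Suc j))"
proof -
  define c where "c = fps_const (x ^ 2 - 1) * (fps_X :: 'a fps) ^ (2 * j + 1)"
  define g where "g = (\<lambda>n. case n of 0 \<Rightarrow> 0 | Suc m \<Rightarrow> c * sc_term x (Suc (Suc j)) m)"
  have "(\<lambda>n. g (Suc n)) sums (c * sc_series x (Suc (Suc j)))"
    unfolding g_def using sums_mult_left_fps[OF sums_sc_series] by simp
  then have "g sums (c * sc_series x (Suc (Suc j)))"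
    by (rule sums_shift_fps[rotated]) (simp add: g_def)
  moreover have "sc_term x j = (\<lambda>n. (1 + fps_X ^ (2 * j + 1)) * sc_term x (Suc j) n + g n)"
    by (rule ext, subst sc_term_rec) (simp add: g_def c_def split: nat.split)
  ultimately have "sc_term x j sums
      ((1 + fps_X ^ (2 * j + 1)) * sc_series x (Suc j) + c * sc_series x (Suc (Suc j)))"
    using sums_add_fps[OF sums_mult_left_fps[OF sums_sc_series]] by simp
  then show ?thesis
    using sums_unique2[OF sums_sc_series] unfolding c_def by blast
qed

lemma nth_sc_series_low:
  assumes "k < 2 * j + 1"
  shows "sc_series x j $ k = inverse (poch_odd j) $ k"
proof -
  have "sc_series x j $ k = (\<Sum>n\<in>{0}. sc_term x j n $ k)"
    unfolding sc_series_eq fps_nth_Abs_fps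
  proof (rule sum.mono_neutral_right)
    show "\<forall>i\<in>{..k} - {0}. sc_term x j i $ k = 0"
    proof
      fix i assume "i \<in> {..k} - {0}"
      then have "2 * j + 1 \<le> sc_exponent j i" by (intro sc_exponent_ge) auto
      with assms show "sc_term x j i $ k = 0" by (intro nth_sc_term_low) linarith
    qed
  qed auto
  also have "\<dots> = inverse (poch_odd j) $ k"
    by (simp add: sc_term_eq sc_exponent_def qpoch_def)
  finally show ?thesis .
qed

lemma runs_gf_eq_qpoch_inf_mult_sc_series:
  fixes x :: "'a::field"
  shows "runs_gf x j = qpoch_inf (- fps_X) (fps_X ^ 2) * sc_series x j"
proof -
  let ?P = "qpoch_inf (- fps_X) (fps_X ^ 2) :: 'a fps"
  have "runs_gf x j - ?P * sc_series x j = 0"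
  proof (rule fps_recurrence_unique[where c = "x ^ 2 - 1"])
    fix j
    show "runs_gf x j - ?P * sc_series x j =
      (1 + fps_X ^ (2 * j + 1)) * (runs_gf x (Suc j) - ?P * sc_series x (Suc j))
      + fps_const (x ^ 2 - 1) * fps_X ^ (2 * j + 1)
          * (runs_gf x (Suc (Suc j)) - ?P * sc_series x (Suc (Suc j)))"
      by (subst runs_gf_rec, subst sc_series_rec) (simp add: algebra_simps)
  next
    fix j k :: nat
    assume k: "k < 2 * j + 1"
    have "(?P * sc_series x j) $ k = (poch_odd j * inverse (poch_odd j)) $ k"
      unfolding fps_mult_nth using k
      by (intro sum.cong) (simp_all add: nth_qpoch_inf_poch_odd nth_sc_series_low)
    also have "poch_odd j * inverse (poch_odd j) = (1 :: 'a fps)"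
      by (rule inverse_mult_eq_1') (simp add: nth_0_qpoch)
    finally have "(?P * sc_series x j) $ k = 1 $ k" .
    then show "(runs_gf x j - ?P * sc_series x j) $ k = 0"
      by (simp only: fps_sub_nth nth_runs_gf_low[OF k] diff_self)
  qed
  then show ?thesis by simp
qed

theorem theorem3p1:
  fixes x :: "'a::field_char_0"
  assumes "x \<noteq> 0"
  shows "SC_gf x =
    qpoch_inf (- fps_X) (fps_X ^ 2) *
      (fps_const (1 - 1 / x) *
         (\<Sum>n. fps_const ((x ^ 2 - 1) ^ n) * fps_X ^ (2 * n ^ 2 + n) /
               (qpoch (fps_X ^ 2) (fps_X ^ 2) n * qpoch (- fps_X) (fps_X ^ 2) (n + 1)))
     + fps_const (1 / x) *
         (\<Sum>n. fps_const ((x ^ 2 - 1) ^ n) * fps_X ^ (2 * n ^ 2 - n) /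
               (qpoch (fps_X ^ 2) (fps_X ^ 2) n * qpoch (- fps_X) (fps_X ^ 2) n)))"
proof -
  have "sc_exponent 1 n = 2 * n ^ 2 + n" "sc_exponent 0 n = 2 * n ^ 2 - n" for n
    using sc_exponent_add[of 1 n] sc_exponent_add[of 0 n] by (simp_all add: power2_eq_square)
  then have "sc_term x 1 = (\<lambda>n. fps_const ((x ^ 2 - 1) ^ n) * fps_X ^ (2 * n ^ 2 + n) /
        (qpoch (fps_X ^ 2) (fps_X ^ 2) n * qpoch (- fps_X) (fps_X ^ 2) (n + 1)))"
    and "sc_term x 0 = (\<lambda>n. fps_const ((x ^ 2 - 1) ^ n) * fps_X ^ (2 * n ^ 2 - n) /
        (qpoch (fps_X ^ 2) (fps_X ^ 2) n * qpoch (- fps_X) (fps_X ^ 2) n))"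
    by (intro ext; simp only: sc_term_def add_0_right)+
  note sums = sc_series_def[of x 1, unfolded this(1)] sc_series_def[of x 0, unfolded this(2)]
  have const: "fps_const (1 - 1 / x) = 1 - fps_const (1 / x)"
    by (simp flip: fps_const_sub)
  show ?thesis
    unfolding sums[symmetric] const SC_gf_eq_runs_gf[OF assms] runs_gf_eq_qpoch_inf_mult_sc_series
    by (simp add: algebra_simps)
qed

end
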